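(* Let $N$ be a finite set and $f: 2^{N} \to \mathbb{R} \cup \{-\infty\}$ with $\mathrm{dom}\, f \neq \emptyset$, and suppose that $\mathrm{dom}\, f$ satisfies (B$^\natural$-EXC). If $f$ satisfies (M$^\natural$-EXC$_{\rm m}$), then $f$ satisfies (M$^\natural$-EXC).
   Context: $\mathrm{dom}\, f = \{X \subseteq N : f(X) > -\infty\}$. Notation: $X - i = X \setminus \{i\}$, $Y + i = Y \cup \{i\}$, $X - i + j = (X\setminus\{i\})\cup\{j\}$, $Y + i - j = (Y \cup\{i\})\setminus\{j\}$. Conventions: $(-\infty)+a=a+(-\infty)=(-\infty)+(-\infty)=-\infty$ for $a \in\mathbb{R}$, $-\infty\le-\infty$, max over empty set is $-\infty$. (B$^\natural$-EXC) for $\mathcal{F}\subseteq 2^N$: for any $X, Y \in \mathcal{F}$ and $i \in X\setminus Y$, either $X - i, Y + i \in \mathcal{F}$, or there exists $j \in Y\setminus X$ with $X - i + j, Y + i - j \in \mathcal{F}$. (M$^\natural$-EXC): for all $X,Y\subseteq N$, $i \in X\setminus Y$: $f(X)+f(Y) \le \max[ f(X-i)+f(Y+i), \max_{j\in Y\setminus X}\{f(X-i+j)+f(Y+i-j)\}]$. (M$^\natural$-EXC$_{\rm m}$): for all $X, Y \subseteq N$ and $I \subseteq X\setminus Y$ there is $J \subseteq Y\setminus X$ with $f(X)+f(Y) \le f((X\setminus I)\cup J)+f((Y\setminus J)\cup I)$. *)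

theory Defs
  imports "HOL-Library.Extended_Real"
begin

text \<open>Set functions f : 2^N -> R \<union> {-\<infinity>} are modelled as f :: 'a set \<Rightarrow> ereal
  with f X \<noteq> \<infinity>; only values on subsets of N matter.\<close>

definition valued_on :: "'a set \<Rightarrow> ('a set \<Rightarrow> ereal) \<Rightarrow> bool" where
  "valued_on N f \<longleftrightarrow> (\<forall>X. X \<subseteq> N \<longrightarrow> f X \<noteq> \<infinity>)"

definition dom_f :: "'a set \<Rightarrow> ('a set \<Rightarrow> ereal) \<Rightarrow> 'a set set" where
  "dom_f N f = {X. X \<subseteq> N \<and> f X > -\<infinity>}"

definition B_nat_EXC :: "'a set set \<Rightarrow> bool" where
  "B_nat_EXC F \<longleftrightarrow>
    (\<forall>X\<in>F. \<forall>Y\<in>F. \<forall>i\<in>X - Y.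
       (X - {i} \<in> F \<and> insert i Y \<in> F) \<or>
       (\<exists>j\<in>Y - X. insert j (X - {i}) \<in> F \<and> insert i Y - {j} \<in> F))"

definition M_nat_EXC :: "'a set \<Rightarrow> ('a set \<Rightarrow> ereal) \<Rightarrow> bool" where
  "M_nat_EXC N f \<longleftrightarrow>
    (\<forall>X Y. X \<subseteq> N \<longrightarrow> Y \<subseteq> N \<longrightarrow> (\<forall>i\<in>X - Y.
       f X + f Y \<le> max (f (X - {i}) + f (insert i Y))
                         (SUP j\<in>Y - X. f (insert j (X - {i})) + f (insert i Y - {j}))))"

definition M_nat_EXC_m :: "'a set \<Rightarrow> ('a set \<Rightarrow> ereal) \<Rightarrow> bool" where
  "M_nat_EXC_m N f \<longleftrightarrow>
    (\<forall>X Y. X \<subseteq> N \<longrightarrow> Y \<subseteq> N \<longrightarrow> (\<forall>I. I \<subseteq> X - Y \<longrightarrow>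
       (\<exists>J. J \<subseteq> Y - X \<and> f X + f Y \<le> f ((X - I) \<union> J) + f ((Y - J) \<union> I))))"

end

theory Submission
  imports Defs
begin

text \<open>Induction on the size of the symmetric difference of \<open>X\<close> and \<open>Y\<close>. At a violation of
  (M\<open>\<^sup>\<natural>\<close>-EXC) for \<open>(X, Y, i)\<close> with all closer pairs fine, \<open>f X\<close> and \<open>f Y\<close> are finite and
  (M\<open>\<^sup>\<natural>\<close>-EXC\<open>\<^sub>m\<close>) with \<open>I = {i}\<close> only offers sets \<open>J\<close> with at least two elements, so
  \<open>Y - X\<close> has at least two elements. If it has exactly two, \<open>J = Y - X\<close>, and the exchange for a
  closer pair together with one more application of (M\<open>\<^sup>\<natural>\<close>-EXC\<open>\<^sub>m\<close>) telescopes into the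
  missing inequality. Otherwise add a modular function so that no move of \<open>i\<close> out of \<open>X\<close> improves
  \<open>X\<close> while every move of \<open>i\<close> into \<open>Y\<close> makes \<open>Y\<close> strictly worse. Exchanges at closer pairs
  then show that a best set among a family of sets closer to \<open>X\<close> than \<open>Y\<close> (the sets \<open>Y - v\<close>, or
  the sets \<open>X + j\<close> when \<open>X - Y = {i}\<close>, or the sets \<open>Y - V + u\<close> with \<open>|V| \<le> 1\<close>, of which
  (B\<open>\<^sup>\<natural>\<close>-EXC) provides one of finite value) would have to be strictly better than itself.\<close>

lemma ereal_add_le_cancel_le:
  fixes a b t y :: ereal
  assumes "y + t \<le> a + b" "a \<le> y" "\<bar>y\<bar> \<noteq> \<infinity>" "t \<noteq> \<infinity>"
  shows "t \<le> b"
  using assms by (cases y; cases t; cases a; cases b) auto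

lemma ereal_add_le_cancel_less:
  fixes a b t y :: ereal
  assumes "y + t \<le> a + b" "a < y" "\<bar>y\<bar> \<noteq> \<infinity>" "\<bar>t\<bar> \<noteq> \<infinity>"
  shows "t < b"
  using assms by (cases y; cases t; cases a; cases b) auto

lemma ereal_add_le_cancel_less_bound:
  fixes a b t y z :: ereal
  assumes "y + t \<le> a + b" "a < y" "b \<le> z" "\<bar>y\<bar> \<noteq> \<infinity>" "\<bar>z\<bar> \<noteq> \<infinity>" "t \<noteq> \<infinity>"
  shows "t < z"
  using assms by (cases y; cases z; cases t; cases a; cases b) auto

lemma ereal_add_le_less_mono:
  fixes a b x y :: ereal
  assumes "a \<le> x" "b < y" "\<bar>x\<bar> \<noteq> \<infinity>" "y \<noteq> \<infinity>"
  shows "a + b < x + y"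
  using assms by (cases x; cases y; cases a; cases b) auto

lemma ereal_le_add_telescope:
  fixes s z w x p q r :: ereal
  assumes "s \<le> z + w" "z + x \<le> p + q" "p + w \<le> r + x" "\<bar>x\<bar> \<noteq> \<infinity>"
  shows "s \<le> r + q"
proof -
  have "s + x \<le> (z + w) + x" using assms(1) by (rule add_right_mono)
  also have "\<dots> = (z + x) + w" by (simp add: ac_simps)
  also have "\<dots> \<le> (p + q) + w" using assms(2) by (rule add_right_mono)
  also have "\<dots> = (p + w) + q" by (simp add: ac_simps)
  also have "\<dots> \<le> (r + x) + q" using assms(3) by (rule add_right_mono)
  also have "\<dots> = (r + q) + x" by (simp add: ac_simps)
  finally show ?thesis using assms(4) by (cases x) (auto simp: ereal_add_le_add_iff2)
qed

lemma ereal_add_real_le_if: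
  assumes "a \<noteq> \<infinity>" "\<And>x. a = ereal x \<Longrightarrow> x + s \<le> t"
  shows "a + ereal s \<le> ereal t"
  using assms by (cases a) auto

lemma ereal_add_real_less_if:
  assumes "a \<noteq> \<infinity>" "\<And>x. a = ereal x \<Longrightarrow> x + s < t"
  shows "a + ereal s < ereal t"
  using assms by (cases a) auto

lemma finite_has_max_point:
  fixes g :: "'b \<Rightarrow> 'c::linorder"
  assumes "finite S" "S \<noteq> {}"
  obtains x where "x \<in> S" "\<And>y. y \<in> S \<Longrightarrow> g y \<le> g x"
proof -
  have "Max (g ` S) \<in> g ` S" using assms by simp
  then obtain x where "x \<in> S" "g x = Max (g ` S)" by force
  then show ?thesis using assms by (intro that) auto
qed

lemma card_le_2_if_subset_doubleton:
  assumes "S \<subseteq> {a, b}" shows "card S \<le> 2"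
proof -
  have "card S \<le> card {a, b}" using assms by (intro card_mono) auto
  also have "\<dots> \<le> 2" by (simp add: card_insert_if)
  finally show ?thesis .
qed

lemma card_le_1_if_subset_singleton: "S \<subseteq> {a} \<Longrightarrow> card S \<le> 1"
  using card_mono[of "{a}" S] by simp

definition exchange_at :: "('a set \<Rightarrow> ereal) \<Rightarrow> 'a set \<Rightarrow> 'a set \<Rightarrow> 'a \<Rightarrow> bool" where
  "exchange_at f X Y i \<longleftrightarrow> f X + f Y \<le> f (X - {i}) + f (insert i Y) \<or>
     (\<exists>j\<in>Y - X. f X + f Y \<le> f (insert j (X - {i})) + f (insert i Y - {j}))"

lemma M_nat_EXC_if_exchange_at:
  assumes "\<And>X Y i. X \<subseteq> N \<Longrightarrow> Y \<subseteq> N \<Longrightarrow> i \<in> X - Y \<Longrightarrow> exchange_at f X Y i"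
  shows "M_nat_EXC N f"
  unfolding M_nat_EXC_def
proof (intro allI impI ballI)
  fix X Y i assume "X \<subseteq> N" "Y \<subseteq> N" "i \<in> X - Y"
  then consider "f X + f Y \<le> f (X - {i}) + f (insert i Y)"
    | j where "j \<in> Y - X" "f X + f Y \<le> f (insert j (X - {i})) + f (insert i Y - {j})"
    using assms unfolding exchange_at_def by blast
  then show "f X + f Y \<le> max (f (X - {i}) + f (insert i Y))
      (SUP j\<in>Y - X. f (insert j (X - {i})) + f (insert i Y - {j}))"
  proof cases
    case (2 j)
    then show ?thesis by (meson SUP_upper le_max_iff_disj order_trans)
  qed (simp add: le_max_iff_disj)
qed

lemma exchange_at_if_minf:
  assumes "f X \<noteq> \<infinity>" "f Y \<noteq> \<infinity>" "f X = -\<infinity> \<or> f Y = -\<infinity>"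
  shows "exchange_at f X Y i"
  using assms unfolding exchange_at_def by (cases "f X"; cases "f Y") auto

lemma exchange_at_if_small_witness:
  assumes "J \<subseteq> Y - X" "finite J" "card J \<le> 1" "i \<in> X - Y"
    and "f X + f Y \<le> f ((X - {i}) \<union> J) + f ((Y - J) \<union> {i})"
  shows "exchange_at f X Y i"
proof -
  consider "J = {}" | j where "J = {j}" using assms(2,3) card_le_Suc0_iff_eq by fastforce
  then show ?thesis
  proof cases
    case 1
    then show ?thesis using assms(5) unfolding exchange_at_def by (simp add: insert_absorb)
  next
    case (2 j)
    have "(X - {i}) \<union> J = insert j (X - {i})" "(Y - J) \<union> {i} = insert i Y - {j}"
      using 2 assms(1,4) by auto
    then show ?thesis using 2 assms(1,5) unfolding exchange_at_def by auto
  qed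
qed

definition modular_shift :: "('a set \<Rightarrow> ereal) \<Rightarrow> ('a \<Rightarrow> real) \<Rightarrow> 'a set \<Rightarrow> ereal" where
  "modular_shift f q S = f S + ereal (sum q S)"

lemma modular_shift_eq_minf_iff [simp]: "modular_shift f q S = -\<infinity> \<longleftrightarrow> f S = -\<infinity>"
  unfolding modular_shift_def by (cases "f S") auto

lemma modular_shift_eq_pinf_iff [simp]: "modular_shift f q S = \<infinity> \<longleftrightarrow> f S = \<infinity>"
  unfolding modular_shift_def by (cases "f S") auto

lemma modular_shift_add_le:
  assumes "f A + f B \<le> f C + f D" "sum q A + sum q B = sum q C + sum q D"
  shows "modular_shift f q A + modular_shift f q B \<le> modular_shift f q C + modular_shift f q D"
proof -
  have "modular_shift f q A + modular_shift f q B = (f A + f B) + ereal (sum q A + sum q B)"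
    unfolding modular_shift_def by (cases "f A"; cases "f B") simp_all
  moreover have
    "modular_shift f q C + modular_shift f q D = (f C + f D) + ereal (sum q C + sum q D)"
    unfolding modular_shift_def by (cases "f C"; cases "f D") simp_all
  ultimately show ?thesis using assms by (simp add: add_right_mono)
qed

lemma exchange_at_modular_shift:
  assumes "finite X" "finite Y" "i \<in> X - Y" "exchange_at f X Y i"
  shows "exchange_at (modular_shift f q) X Y i"
proof -
  from assms(4) consider "f X + f Y \<le> f (X - {i}) + f (insert i Y)"
    | j where "j \<in> Y - X" "f X + f Y \<le> f (insert j (X - {i})) + f (insert i Y - {j})"
    unfolding exchange_at_def by blast
  then show ?thesis
  proof cases
    case 1
    moreover have "sum q X + sum q Y = sum q (X - {i}) + sum q (insert i Y)"
      using assms(1-3) by (simp add: sum_diff1)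
    ultimately show ?thesis unfolding exchange_at_def by (blast intro: modular_shift_add_le)
  next
    case (2 j)
    moreover have "sum q X + sum q Y = sum q (insert j (X - {i})) + sum q (insert i Y - {j})"
      using assms(1-3) 2(1) by (auto simp: sum_diff1)
    ultimately show ?thesis unfolding exchange_at_def by (blast intro: modular_shift_add_le)
  qed
qed

lemma modular_shift_normalizes_violation:
  fixes f :: "'a set \<Rightarrow> ereal"
  assumes fin: "finite X" "finite Y" and i: "i \<in> X - Y"
    and not_pinf: "\<And>S. S \<subseteq> X \<union> Y \<Longrightarrow> f S \<noteq> \<infinity>"
    and violation: "\<not> exchange_at f X Y i"
  obtains q where "modular_shift f q (X - {i}) \<le> modular_shift f q X"
    "\<And>v. v \<in> Y - X \<Longrightarrow> modular_shift f q (insert v (X - {i})) \<le> modular_shift f q X"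
    "modular_shift f q (insert i Y) < modular_shift f q Y"
    "\<And>j. j \<in> Y - X \<Longrightarrow> modular_shift f q (insert i Y - {j}) < modular_shift f q Y"
proof -
  txt \<open>\<open>c\<close> makes removing \<open>i\<close> from \<open>X\<close> neutral and \<open>q v\<close> makes swapping \<open>v\<close> for \<open>i\<close> neutral;
    where \<open>f\<close> is \<open>-\<infinity>\<close> on that set, the \<open>\<plusminus> 1\<close> alternatives instead just make the
    corresponding move into \<open>Y\<close> strictly worse.\<close>
  define r where "r S = real_of_ereal (f S)" for S
  have "f X \<noteq> -\<infinity>" "f Y \<noteq> -\<infinity>"
    using violation exchange_at_if_minf[of f X Y i] not_pinf[of X] not_pinf[of Y] by auto
  then have fX: "f X = ereal (r X)" and fY: "f Y = ereal (r Y)"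
    using not_pinf[of X] not_pinf[of Y] unfolding r_def by (cases "f X"; cases "f Y"; simp)+
  have remove_less: "\<not> f X + f Y \<le> f (X - {i}) + f (insert i Y)"
    and swap_less: "\<And>j. j \<in> Y - X \<Longrightarrow> \<not> f X + f Y \<le> f (insert j (X - {i})) + f (insert i Y - {j})"
    using violation unfolding exchange_at_def by auto
  define c where "c = (if f (X - {i}) = -\<infinity> then r Y - r (insert i Y) - 1 else r (X - {i}) - r X)"
  define q where "q x = (if x = i then c else if x \<in> Y - X then
      (if f (insert x (X - {i})) = -\<infinity> then c + r (insert i Y - {x}) - r Y + 1
       else c + r X - r (insert x (X - {i}))) else 0)" for x
  have q_i: "q i = c" by (simp add: q_def)
  have q_Y_diff: "q j = (if f (insert j (X - {i})) = -\<infinity> then c + r (insert i Y - {j}) - r Y + 1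
      else c + r X - r (insert j (X - {i})))" if "j \<in> Y - X" for j
    using that i by (auto simp: q_def)
  have sum_remove_i: "sum q (X - {i}) = sum q X - c" using fin i by (simp add: sum_diff1 q_i)
  have sum_swap_X: "sum q (insert v (X - {i})) = sum q X - c + q v" if "v \<in> Y - X" for v
    using that fin sum_remove_i by simp
  have sum_add_i: "sum q (insert i Y) = sum q Y + c" using fin i by (simp add: q_i)
  have sum_swap_Y: "sum q (insert i Y - {j}) = sum q Y + c - q j" if "j \<in> Y - X" for j
  proof -
    have "insert i Y - {j} = insert i (Y - {j})" using that i by auto
    then show ?thesis using that fin i by (simp add: sum_diff1 q_i)
  qed
  show ?thesis
  proof (rule that)
    show "modular_shift f q (X - {i}) \<le> modular_shift f q X"
      unfolding modular_shift_def fX sum_remove_i plus_ereal.simps(1)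
      by (rule ereal_add_real_le_if) (use not_pinf[of "X - {i}"] in \<open>auto simp: c_def r_def\<close>)
  next
    fix v assume v: "v \<in> Y - X"
    show "modular_shift f q (insert v (X - {i})) \<le> modular_shift f q X"
      unfolding modular_shift_def fX sum_swap_X[OF v] plus_ereal.simps(1)
      by (rule ereal_add_real_le_if)
        (use not_pinf[of "insert v (X - {i})"] v in \<open>auto simp: q_Y_diff[OF v] r_def\<close>)
  next
    show "modular_shift f q (insert i Y) < modular_shift f q Y"
      unfolding modular_shift_def fY sum_add_i plus_ereal.simps(1)
    proof (rule ereal_add_real_less_if)
      fix x assume x: "f (insert i Y) = ereal x"
      then have "r (insert i Y) = x" by (simp add: r_def)
      show "x + (sum q Y + c) < r Y + sum q Y"
      proof (cases "f (X - {i})")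
        case (real y)
        then have "r (X - {i}) = y" by (simp add: r_def)
        then show ?thesis using remove_less real x by (simp add: fX fY c_def)
      qed (use not_pinf[of "X - {i}"] \<open>r (insert i Y) = x\<close> in \<open>auto simp: c_def\<close>)
    qed (use not_pinf[of "insert i Y"] i in auto)
  next
    fix j assume j: "j \<in> Y - X"
    show "modular_shift f q (insert i Y - {j}) < modular_shift f q Y"
      unfolding modular_shift_def fY sum_swap_Y[OF j] plus_ereal.simps(1)
    proof (rule ereal_add_real_less_if)
      fix x assume x: "f (insert i Y - {j}) = ereal x"
      then have "r (insert i Y - {j}) = x" by (simp add: r_def)
      show "x + (sum q Y + c - q j) < r Y + sum q Y"
      proof (cases "f (insert j (X - {i}))")
        case (real y)
        then have "r (insert j (X - {i})) = y" by (simp add: r_def)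
        then show ?thesis using swap_less[OF j] real x by (simp add: fX fY q_Y_diff[OF j])
      qed (use not_pinf[of "insert j (X - {i})"] j \<open>r (insert i Y - {j}) = x\<close> in
          \<open>auto simp: q_Y_diff[OF j]\<close>)
    qed (use not_pinf[of "insert i Y - {j}"] i j in auto)
  qed
qed


text \<open>No such
  configuration exists.\<close>

locale normalized_minimal_violation =
  fixes N :: "'a set" and g :: "'a set \<Rightarrow> ereal" and X Y :: "'a set" and i :: 'a
  assumes finite_N: "finite N"
    and X_subset: "X \<subseteq> N" and Y_subset: "Y \<subseteq> N" and i_mem: "i \<in> X - Y"
    and not_pinf: "\<And>S. S \<subseteq> N \<Longrightarrow> g S \<noteq> \<infinity>"
    and X_not_minf: "g X \<noteq> -\<infinity>" and Y_not_minf: "g Y \<noteq> -\<infinity>"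
    and card_Y_diff: "3 \<le> card (Y - X)"
    and exchange_closer: "\<And>X' Y' i'. X' \<subseteq> N \<Longrightarrow> Y' \<subseteq> N \<Longrightarrow> i' \<in> X' - Y' \<Longrightarrow>
      card (X' - Y') + card (Y' - X') < card (X - Y) + card (Y - X) \<Longrightarrow> exchange_at g X' Y' i'"
    and remove_i_le: "g (X - {i}) \<le> g X"
    and swap_into_X_le: "\<And>v. v \<in> Y - X \<Longrightarrow> g (insert v (X - {i})) \<le> g X"
    and add_i_less: "g (insert i Y) < g Y"
    and swap_into_Y_less: "\<And>j. j \<in> Y - X \<Longrightarrow> g (insert i Y - {j}) < g Y"
begin

lemma finite_X: "finite X" and finite_Y: "finite Y"
  using finite_N X_subset Y_subset finite_subset by auto

lemma finite_value_if_not_minf: "S \<subseteq> N \<Longrightarrow> g S \<noteq> -\<infinity> \<Longrightarrow> \<bar>g S\<bar> \<noteq> \<infinity>"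
  using not_pinf by auto

lemma X_finite_value: "\<bar>g X\<bar> \<noteq> \<infinity>" and Y_finite_value: "\<bar>g Y\<bar> \<noteq> \<infinity>"
  using finite_value_if_not_minf X_subset Y_subset X_not_minf Y_not_minf by auto

lemma card_X_diff_pos: "1 \<le> card (X - Y)"
  using i_mem finite_X by (metis One_nat_def Suc_leI card_gt_0_iff empty_iff finite_Diff)

lemma add_i_remove_at_most_one_less:
  assumes "V \<subseteq> Y - X" "card V \<le> 1"
  shows "g (insert i Y - V) < g Y"
proof -
  have "finite V" using assms(1) finite_Y finite_subset by blast
  then consider "V = {}" | j where "V = {j}" using assms(2) card_le_Suc0_iff_eq by fastforce
  then show ?thesis using add_i_less swap_into_Y_less assms(1) by cases auto
qed

text \<open>The exchange property at the closer pair \<open>(X, Z)\<close> is violated as soon as every move of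
  \<open>i\<close> into \<open>Z\<close> strictly decreases \<open>g Z\<close>, since no move of \<open>i\<close> out of \<open>X\<close> increases \<open>g X\<close>.\<close>

lemma no_improving_partner:
  assumes Z: "Z \<subseteq> N" "i \<notin> Z" "Z - X \<subseteq> Y - X"
    and closer: "card (X - Z) + card (Z - X) < card (X - Y) + card (Y - X)"
    and "g (insert i Z) < g Z" "\<And>v. v \<in> Z - X \<Longrightarrow> g (insert i Z - {v}) < g Z"
  shows False
proof -
  have "g Z \<noteq> \<infinity>" using not_pinf Z(1) by blast
  have "exchange_at g X Z i" using exchange_closer[OF X_subset Z(1)] i_mem Z(2) closer by auto
  then consider "g X + g Z \<le> g (X - {i}) + g (insert i Z)"
    | v where "v \<in> Z - X" "g X + g Z \<le> g (insert v (X - {i})) + g (insert i Z - {v})"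
    unfolding exchange_at_def by blast
  then show False
  proof cases
    case 1
    moreover have "g (X - {i}) + g (insert i Z) < g X + g Z"
      using ereal_add_le_less_mono[OF remove_i_le assms(5) X_finite_value \<open>g Z \<noteq> \<infinity>\<close>] .
    ultimately show False by simp
  next
    case (2 v)
    moreover have "g (insert v (X - {i})) + g (insert i Z - {v}) < g X + g Z"
      using 2(1) Z(3) by (intro ereal_add_le_less_mono swap_into_X_le assms(6) X_finite_value
          \<open>g Z \<noteq> \<infinity>\<close>) auto
    ultimately show False by simp
  qed
qed

lemma swap_out_of_best_removal_less:
  assumes w: "w \<in> Y - X" "\<And>v. v \<in> Y - X \<Longrightarrow> g (Y - {v}) \<le> g (Y - {w})"
    and Y_le: "g Y \<le> g (Y - {w})" and v: "v \<in> Y - {w} - X"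
  shows "g (insert i (Y - {w}) - {v}) < g (Y - {w})"
proof -
  define T where "T = insert i (Y - {w}) - {v}"
  have T_subset: "T \<subseteq> N" using T_def Y_subset i_mem X_subset by auto
  have "g T \<noteq> \<infinity>" using not_pinf T_subset by blast
  have "\<bar>g (Y - {w})\<bar> \<noteq> \<infinity>"
    using finite_value_if_not_minf Y_subset Y_le Y_not_minf
    by (metis Diff_subset ereal_infty_less_eq(2) order_trans)
  have "card (Y - T) \<le> 2"
    by (rule card_le_2_if_subset_doubleton[of _ v w]) (use T_def in auto)
  moreover have "card (T - Y) \<le> 1"
    by (rule card_le_1_if_subset_singleton[of _ i]) (use T_def in auto)
  ultimately have "exchange_at g Y T v"
    using exchange_closer[OF Y_subset T_subset] v card_X_diff_pos card_Y_diff T_def by auto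
  moreover have "T - Y = {i}" using T_def i_mem v by auto
  ultimately consider (remove) "g Y + g T \<le> g (Y - {v}) + g (insert v T)"
    | (swap) "g Y + g T \<le> g (insert i (Y - {v})) + g (insert v T - {i})"
    unfolding exchange_at_def by auto
  then show ?thesis
    unfolding T_def[symmetric]
  proof cases
    case remove
    have "insert v T = insert i Y - {w}" using T_def v i_mem w(1) by auto
    then have less: "g (insert v T) < g Y" using swap_into_Y_less[OF w(1)] by simp
    have le: "g (Y - {v}) \<le> g (Y - {w})" using w(2) v by auto
    have "g Y + g T \<le> g (insert v T) + g (Y - {v})" using remove by (simp add: add.commute)
    from ereal_add_le_cancel_less_bound[OF this less le Y_finite_value
        \<open>\<bar>g (Y - {w})\<bar> \<noteq> \<infinity>\<close> \<open>g T \<noteq> \<infinity>\<close>]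
    show "g T < g (Y - {w})" .
  next
    case swap
    have "insert i (Y - {v}) = insert i Y - {v}" "insert v T - {i} = Y - {w}"
      using T_def v i_mem by auto
    with swap have "g Y + g T \<le> g (insert i Y - {v}) + g (Y - {w})" by simp
    from ereal_add_le_cancel_less_bound[OF this swap_into_Y_less order_refl Y_finite_value
        \<open>\<bar>g (Y - {w})\<bar> \<noteq> \<infinity>\<close> \<open>g T \<noteq> \<infinity>\<close>]
    show "g T < g (Y - {w})" using v by auto
  qed
qed

lemma remove_from_Y_less:
  assumes "v \<in> Y - X"
  shows "g (Y - {v}) < g Y"
proof (rule ccontr)
  assume "\<not> g (Y - {v}) < g Y"
  obtain w where w: "w \<in> Y - X" "\<And>v. v \<in> Y - X \<Longrightarrow> g (Y - {v}) \<le> g (Y - {w})"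
    using finite_has_max_point[of "Y - X" "\<lambda>v. g (Y - {v})"] finite_Y assms by blast
  have Y_le: "g Y \<le> g (Y - {w})" using w(2)[OF assms] \<open>\<not> g (Y - {v}) < g Y\<close> by auto
  show False
  proof (rule no_improving_partner[of "Y - {w}"])
    show "Y - {w} \<subseteq> N" "i \<notin> Y - {w}" "Y - {w} - X \<subseteq> Y - X" using Y_subset i_mem by auto
    have "X - (Y - {w}) = X - Y" "Y - {w} - X = (Y - X) - {w}" using w(1) by auto
    moreover have "card ((Y - X) - {w}) < card (Y - X)"
      using w(1) finite_Y by (intro card_Diff1_less) auto
    ultimately show "card (X - (Y - {w})) + card (Y - {w} - X) < card (X - Y) + card (Y - X)"
      by simp
    have "insert i (Y - {w}) = insert i Y - {w}" using i_mem w(1) by auto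
    then show "g (insert i (Y - {w})) < g (Y - {w})" using swap_into_Y_less[OF w(1)] Y_le by auto
  qed (rule swap_out_of_best_removal_less[OF w Y_le])
qed

lemma best_double_swap_not_better:
  assumes X_diff: "X - Y = {i}"
    and j: "j \<in> Y - X" "\<And>k. k \<in> Y - X \<Longrightarrow> g (insert k X) \<le> g (insert j X)"
    and k: "k \<in> Y - X" "k \<noteq> j"
  shows "g (insert k (insert j X - {i})) \<le> g (insert j X)"
proof -
  define B where "B = insert k (insert j X - {i})"
  have B_subset: "B \<subseteq> N" using B_def j(1) k(1) X_subset Y_subset by auto
  have "g B \<noteq> \<infinity>" using not_pinf B_subset by blast
  have "card (B - X) \<le> 2"
    by (rule card_le_2_if_subset_doubleton[of _ j k]) (use B_def in auto)
  moreover have "card (X - B) \<le> 1"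
    by (rule card_le_1_if_subset_singleton[of _ i]) (use B_def in auto)
  ultimately have "exchange_at g B X j"
    using exchange_closer[OF B_subset X_subset] card_X_diff_pos card_Y_diff j(1) i_mem B_def by auto
  moreover have "X - B = {i}" using B_def k i_mem by auto
  ultimately consider (remove) "g B + g X \<le> g (B - {j}) + g (insert j X)"
    | (swap) "g B + g X \<le> g (insert i (B - {j})) + g (insert j X - {i})"
    unfolding exchange_at_def by auto
  then show ?thesis
    unfolding B_def[symmetric]
  proof cases
    case remove
    have "B - {j} = insert k (X - {i})" using B_def k j(1) i_mem by auto
    then have le: "g (B - {j}) \<le> g X" using swap_into_X_le k(1) by simp
    have "g X + g B \<le> g (B - {j}) + g (insert j X)" using remove by (simp add: add.commute)
    from ereal_add_le_cancel_le[OF this le X_finite_value \<open>g B \<noteq> \<infinity>\<close>]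
    show "g B \<le> g (insert j X)" .
  next
    case swap
    have "insert j X - {i} = insert j (X - {i})" using j(1) i_mem by auto
    then have le: "g (insert j X - {i}) \<le> g X" using swap_into_X_le[OF j(1)] by simp
    have "g X + g B \<le> g (insert j X - {i}) + g (insert i (B - {j}))"
      using swap by (simp add: add.commute)
    from ereal_add_le_cancel_le[OF this le X_finite_value \<open>g B \<noteq> \<infinity>\<close>]
    have "g B \<le> g (insert i (B - {j}))" .
    moreover have "insert i (B - {j}) = insert k X" using B_def k j(1) i_mem by auto
    ultimately show "g B \<le> g (insert j X)" using j(2)[OF k(1)] by simp
  qed
qed

lemma contradiction_if_X_diff_singleton:
  assumes X_diff: "X - Y = {i}"
    and swap_into_X_ge: "\<And>j. j \<in> Y - X \<Longrightarrow> g Y + g X \<le> g (Y - {j}) + g (insert j X)"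
  shows False
proof -
  have add_to_X_greater: "g X < g (insert j X)" if "j \<in> Y - X" for j
    using ereal_add_le_cancel_less[OF swap_into_X_ge[OF that] remove_from_Y_less[OF that]
        Y_finite_value X_finite_value] .
  have "Y - X \<noteq> {}" using card_Y_diff by (metis card.empty not_numeral_le_zero)
  then obtain j where j: "j \<in> Y - X" "\<And>k. k \<in> Y - X \<Longrightarrow> g (insert k X) \<le> g (insert j X)"
    using finite_has_max_point[of "Y - X" "\<lambda>k. g (insert k X)"] finite_Y by blast
  define X' where "X' = insert j X"
  have X'_subset: "X' \<subseteq> N" using X'_def j X_subset Y_subset by auto
  have X_less_X': "g X < g X'" using add_to_X_greater[OF j(1)] X'_def by simp
  have X'_finite_value: "\<bar>g X'\<bar> \<noteq> \<infinity>"
    using finite_value_if_not_minf[OF X'_subset] X_less_X' by auto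
  have "X' - Y = X - Y" "Y - X' = (Y - X) - {j}" using X'_def j(1) by auto
  moreover have "card ((Y - X) - {j}) < card (Y - X)"
    using j(1) finite_Y by (intro card_Diff1_less) auto
  ultimately have "exchange_at g X' Y i"
    using exchange_closer[OF X'_subset Y_subset] i_mem X'_def by auto
  then consider (remove) "g X' + g Y \<le> g (X' - {i}) + g (insert i Y)"
    | (swap) k where "k \<in> Y - X'" "g X' + g Y \<le> g (insert k (X' - {i})) + g (insert i Y - {k})"
    unfolding exchange_at_def by blast
  then show False
  proof cases
    case remove
    have le: "g (X' - {i}) \<le> g X"
      using swap_into_X_le[OF j(1)] X'_def j(1) i_mem by (auto simp: insert_Diff_if)
    have "g Y + g X' \<le> g (insert i Y) + g (X' - {i})" using remove by (simp add: add.commute)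
    from ereal_add_le_cancel_less_bound[OF this add_i_less le Y_finite_value X_finite_value]
    have "g X' < g X" using X'_finite_value by auto
    with X_less_X' show False by simp
  next
    case (swap k)
    have "g Y + g X' \<le> g (insert i Y - {k}) + g (insert k (X' - {i}))"
      using swap(2) by (simp add: add.commute)
    from ereal_add_le_cancel_less[OF this swap_into_Y_less Y_finite_value X'_finite_value]
    have "g X' < g (insert k (X' - {i}))" using swap(1) X'_def by auto
    with best_double_swap_not_better[OF X_diff j, of k] swap(1) X'_def show False by auto
  qed
qed

context
  fixes u :: 'a and V :: "'a set"
  assumes u_mem: "u \<in> X - Y - {i}" and V_subset: "V \<subseteq> Y - X" and card_V: "card V \<le> 1"
    and best: "\<And>u' V'. u' \<in> X - Y - {i} \<Longrightarrow> V' \<subseteq> Y - X \<Longrightarrow> card V' \<le> 1 \<Longrightarrow>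
      g (insert u' (Y - V')) \<le> g (insert u (Y - V))"
    and candidate_not_minf: "g (insert u (Y - V)) \<noteq> -\<infinity>"
begin

lemma candidate_subset: "insert u (Y - V) \<subseteq> N"
  using u_mem X_subset Y_subset by auto

lemma candidate_finite_value: "\<bar>g (insert u (Y - V))\<bar> \<noteq> \<infinity>"
  using finite_value_if_not_minf[OF candidate_subset] candidate_not_minf .

lemma card_X_diff_ge_2: "2 \<le> card (X - Y)"
proof -
  have "card {i, u} \<le> card (X - Y)" using u_mem i_mem finite_X by (intro card_mono) auto
  then show ?thesis using u_mem by (auto simp: card_insert_if)
qed

lemma add_i_to_candidate_less: "g (insert i (insert u (Y - V))) < g (insert u (Y - V))"
proof -
  define Z where "Z = insert u (Y - V)"
  have iZ_subset: "insert i Z \<subseteq> N" using Z_def candidate_subset i_mem X_subset by auto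
  have "g (insert i Z) \<noteq> \<infinity>" using not_pinf iZ_subset by blast
  have "Y - insert i Z = V" using Z_def V_subset i_mem u_mem by auto
  moreover have "card (insert i Z - Y) \<le> 2"
    by (rule card_le_2_if_subset_doubleton[of _ u i]) (use Z_def in auto)
  ultimately have "exchange_at g (insert i Z) Y i"
    using exchange_closer[OF iZ_subset Y_subset] card_V card_X_diff_ge_2 card_Y_diff i_mem by auto
  then consider (remove) "g (insert i Z) + g Y \<le> g (insert i Z - {i}) + g (insert i Y)"
    | (swap) j where "j \<in> V"
      "g (insert i Z) + g Y \<le> g (insert j (insert i Z - {i})) + g (insert i Y - {j})"
    unfolding exchange_at_def \<open>Y - insert i Z = V\<close> by blast
  then show ?thesis
    unfolding Z_def[symmetric]
  proof cases
    case remove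
    have "insert i Z - {i} = Z" using Z_def u_mem i_mem by auto
    with remove have "g Y + g (insert i Z) \<le> g (insert i Y) + g Z" by (simp add: add.commute)
    from ereal_add_le_cancel_less_bound[OF this add_i_less order_refl Y_finite_value]
    show "g (insert i Z) < g Z" using candidate_finite_value Z_def \<open>g (insert i Z) \<noteq> \<infinity>\<close> by simp
  next
    case (swap j)
    have "finite V" using V_subset finite_Y finite_subset by blast
    then have "V = {j}" using swap(1) card_V card_le_Suc0_iff_eq by fastforce
    then have "insert j (insert i Z - {i}) = insert u (Y - {})"
      using Z_def u_mem i_mem V_subset by auto
    then have le: "g (insert j (insert i Z - {i})) \<le> g Z"
      using best[OF u_mem, of "{}"] Z_def by simp
    have less: "g (insert i Y - {j}) < g Y" using swap(1) V_subset by (intro swap_into_Y_less) auto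
    have "g Y + g (insert i Z) \<le> g (insert i Y - {j}) + g (insert j (insert i Z - {i}))"
      using swap(2) by (simp add: add.commute)
    from ereal_add_le_cancel_less_bound[OF this less le Y_finite_value
        candidate_finite_value[folded Z_def] \<open>g (insert i Z) \<noteq> \<infinity>\<close>]
    show "g (insert i Z) < g Z" .
  qed
qed

lemma swap_out_of_candidate_less:
  assumes v: "v \<in> insert u (Y - V) - X"
  shows "g (insert i (insert u (Y - V)) - {v}) < g (insert u (Y - V))"
proof -
  define Z where "Z = insert u (Y - V)"
  have v_mem: "v \<in> Y - X" "v \<notin> V" using v u_mem by auto
  define T where "T = insert i Z - {v}"
  have T_subset: "T \<subseteq> N" using T_def Z_def candidate_subset i_mem X_subset by auto
  have "g T \<noteq> \<infinity>" using not_pinf T_subset by blast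
  have "finite V" using V_subset finite_Y finite_subset by blast
  have "Y - T = insert v V" "T - Y = {u, i}" using T_def Z_def V_subset u_mem i_mem v_mem by auto
  moreover have "card (insert v V) \<le> 2" using card_V \<open>finite V\<close> by (simp add: card_insert_if)
  ultimately have "exchange_at g Y T v"
    using exchange_closer[OF Y_subset T_subset] card_le_2_if_subset_doubleton[of "{u, i}" u i]
      card_X_diff_ge_2 card_Y_diff v_mem by auto
  then consider (remove) "g Y + g T \<le> g (Y - {v}) + g (insert v T)"
    | (swap_i) "g Y + g T \<le> g (insert i (Y - {v})) + g (insert v T - {i})"
    | (swap_u) "g Y + g T \<le> g (insert u (Y - {v})) + g (insert v T - {u})"
    unfolding exchange_at_def \<open>T - Y = {u, i}\<close> by auto
  then show ?thesis
    unfolding Z_def[symmetric] T_def[symmetric]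
  proof cases
    case remove
    have "insert v T = insert i Z" using T_def Z_def v by auto
    with remove have "g Y + g T \<le> g (Y - {v}) + g (insert i Z)" by simp
    from ereal_add_le_cancel_less_bound[OF this remove_from_Y_less[OF v_mem(1)]
        less_imp_le[OF add_i_to_candidate_less[folded Z_def]] Y_finite_value
        candidate_finite_value[folded Z_def] \<open>g T \<noteq> \<infinity>\<close>]
    show "g T < g Z" .
  next
    case swap_i
    have "insert i (Y - {v}) = insert i Y - {v}" "insert v T - {i} = Z"
      using T_def Z_def v i_mem u_mem by auto
    with swap_i have "g Y + g T \<le> g (insert i Y - {v}) + g Z" by simp
    from ereal_add_le_cancel_less_bound[OF this swap_into_Y_less[OF v_mem(1)] order_refl
        Y_finite_value candidate_finite_value[folded Z_def] \<open>g T \<noteq> \<infinity>\<close>]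
    show "g T < g Z" .
  next
    case swap_u
    have "insert v T - {u} = insert i Y - V" using T_def Z_def v_mem u_mem i_mem V_subset by auto
    with swap_u have "g Y + g T \<le> g (insert i Y - V) + g (insert u (Y - {v}))"
      by (simp add: add.commute)
    moreover have "g (insert u (Y - {v})) \<le> g Z" using best[OF u_mem, of "{v}"] v_mem Z_def by simp
    ultimately show "g T < g Z"
      by (rule ereal_add_le_cancel_less_bound[OF _ add_i_remove_at_most_one_less[OF V_subset card_V]
            _ Y_finite_value candidate_finite_value[folded Z_def] \<open>g T \<noteq> \<infinity>\<close>])
  qed
qed

lemma best_candidate_contradiction: False
proof (rule no_improving_partner[of "insert u (Y - V)"])
  show "insert u (Y - V) \<subseteq> N" "i \<notin> insert u (Y - V)" "insert u (Y - V) - X \<subseteq> Y - X"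
    using candidate_subset i_mem u_mem by auto
  have "X - insert u (Y - V) = (X - Y) - {u}" using u_mem V_subset by auto
  moreover have "card ((X - Y) - {u}) < card (X - Y)"
    using u_mem finite_X by (intro card_Diff1_less) auto
  moreover have "card (insert u (Y - V) - X) \<le> card (Y - X)"
    using u_mem finite_Y by (intro card_mono) auto
  ultimately show "card (X - insert u (Y - V)) + card (insert u (Y - V) - X)
      < card (X - Y) + card (Y - X)" by simp
qed (fact add_i_to_candidate_less, fact swap_out_of_candidate_less)

end

lemma contradiction_if_X_diff_not_singleton:
  assumes "X - Y \<noteq> {i}"
    and reach: "\<And>u. u \<in> X - Y - {i} \<Longrightarrow> \<exists>V \<subseteq> Y - X. card V \<le> 1 \<and> g (insert u (Y - V)) \<noteq> -\<infinity>"
  shows False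
proof -
  define C where "C = {(u, V). u \<in> X - Y - {i} \<and> V \<subseteq> Y - X \<and> card V \<le> 1}"
  obtain u where u: "u \<in> X - Y - {i}" using assms(1) i_mem by auto
  have "C \<subseteq> X \<times> Pow Y" using C_def by auto
  then have "finite C" using finite_X finite_Y finite_subset by blast
  moreover have "(u, {}) \<in> C" using C_def u by auto
  ultimately obtain p where p: "p \<in> C"
    "\<And>p'. p' \<in> C \<Longrightarrow> (\<lambda>(u, V). g (insert u (Y - V))) p' \<le> (\<lambda>(u, V). g (insert u (Y - V))) p"
    using finite_has_max_point[of C] by blast
  obtain u' V' where p_eq: "p = (u', V')" by (cases p)
  obtain V where V: "V \<subseteq> Y - X" "card V \<le> 1" "g (insert u (Y - V)) \<noteq> -\<infinity>"
    using reach[OF u] by blast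
  have "g (insert u (Y - V)) \<le> g (insert u' (Y - V'))"
    using p(2)[of "(u, V)"] u V p_eq C_def by auto
  then have "g (insert u' (Y - V')) \<noteq> -\<infinity>" using V(3) by auto
  then show False
    using best_candidate_contradiction[of u' V'] p p_eq C_def by auto
qed

end

lemma M_nat_EXC_m_witness_of_violation:
  assumes mm: "M_nat_EXC_m N f" and sub: "X \<subseteq> N" "Y \<subseteq> N" and i: "i \<in> X - Y"
    and "finite Y" and violation: "\<not> exchange_at f X Y i"
  obtains J where "J \<subseteq> Y - X" "2 \<le> card J" "f X + f Y \<le> f ((X - {i}) \<union> J) + f ((Y - J) \<union> {i})"
proof -
  obtain J where J: "J \<subseteq> Y - X" "f X + f Y \<le> f ((X - {i}) \<union> J) + f ((Y - J) \<union> {i})"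
    using mm[unfolded M_nat_EXC_m_def, rule_format, OF sub, of "{i}"] i by auto
  have "finite J" using J(1) \<open>finite Y\<close> finite_subset by blast
  then have "\<not> card J \<le> 1" using exchange_at_if_small_witness[OF J(1) _ _ i J(2)] violation by blast
  then show ?thesis using that J by simp
qed

lemma M_nat_EXC_m_swap_into_X:
  assumes mm: "M_nat_EXC_m N f" and sub: "X \<subseteq> N" "Y \<subseteq> N"
    and X_diff: "X - Y = {i}" and j: "j \<in> Y - X" and violation: "\<not> exchange_at f X Y i"
  shows "f Y + f X \<le> f (Y - {j}) + f (insert j X)"
proof -
  obtain K where K: "K \<subseteq> X - Y" "f Y + f X \<le> f ((Y - {j}) \<union> K) + f ((X - K) \<union> {j})"
    using mm[unfolded M_nat_EXC_m_def, rule_format, OF sub(2,1), of "{j}"] j by auto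
  have "K \<noteq> {i}"
  proof
    assume "K = {i}"
    moreover have "(Y - {j}) \<union> {i} = insert i Y - {j}" "(X - {i}) \<union> {j} = insert j (X - {i})"
      using j X_diff by auto
    ultimately have "f X + f Y \<le> f (insert j (X - {i})) + f (insert i Y - {j})"
      using K(2) by (simp add: add.commute)
    then show False using violation j unfolding exchange_at_def by blast
  qed
  then have "K = {}" using K(1) X_diff by auto
  then show ?thesis using K(2) by simp
qed

lemma M_nat_EXC_m_telescope:
  assumes mm: "M_nat_EXC_m N f" and sub: "X \<subseteq> N" "Y \<subseteq> N" and i: "i \<in> X - Y"
    and ab: "Y - X = {a, b}" "a \<noteq> b" and X_finite_value: "\<bar>f X\<bar> \<noteq> \<infinity>"
    and start: "f X + f Y \<le> f ((X - {i}) \<union> (Y - X)) + f (insert i (X \<inter> Y))"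
    and step: "f ((X - {i}) \<union> (Y - X)) + f X \<le> f (insert a X) + f (insert b (X - {i}))"
  shows "f X + f Y \<le> f (insert b (X - {i})) + f (insert i Y - {b})"
proof -
  define W where "W = insert i (X \<inter> Y)"
  have aX_subset: "insert a X \<subseteq> N" and W_subset: "W \<subseteq> N" using ab(1) sub i W_def by auto
  obtain J where J: "J \<subseteq> W - insert a X"
    "f (insert a X) + f W \<le> f ((insert a X - (X - Y - {i})) \<union> J) + f ((W - J) \<union> (X - Y - {i}))"
    using mm[unfolded M_nat_EXC_m_def, rule_format, OF aX_subset W_subset, of "X - Y - {i}"] W_def
    by auto
  have "J = {}" using J(1) W_def i by auto
  moreover have "insert a X - (X - Y - {i}) = insert i Y - {b}" "W \<union> (X - Y - {i}) = X"
    using W_def ab i by auto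
  ultimately have "f (insert a X) + f W \<le> f (insert i Y - {b}) + f X" using J(2) by simp
  from ereal_le_add_telescope[OF start[folded W_def] step this X_finite_value]
  show ?thesis by (simp add: add.commute)
qed

lemma exchange_at_if_card_Y_diff_eq_2:
  fixes f :: "'a set \<Rightarrow> ereal"
  assumes fin: "finite N" and val: "valued_on N f" and mm: "M_nat_EXC_m N f"
    and sub: "X \<subseteq> N" "Y \<subseteq> N" and i: "i \<in> X - Y" and card_Y_diff: "card (Y - X) = 2"
    and closer: "\<And>X' Y' i'. card (X' - Y') + card (Y' - X') < card (X - Y) + card (Y - X) \<Longrightarrow>
      X' \<subseteq> N \<Longrightarrow> Y' \<subseteq> N \<Longrightarrow> i' \<in> X' - Y' \<Longrightarrow> exchange_at f X' Y' i'"
  shows "exchange_at f X Y i"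
proof (rule ccontr)
  assume violation: "\<not> exchange_at f X Y i"
  have not_pinf: "\<And>S. S \<subseteq> N \<Longrightarrow> f S \<noteq> \<infinity>" using val unfolding valued_on_def by blast
  have "finite X" "finite Y" using fin sub finite_subset by auto
  obtain j k where jk: "Y - X = {j, k}" "j \<noteq> k" using card_Y_diff card_2_iff by metis
  show False
  proof (cases "X - Y = {i}")
    case True
    have "f Y + f X \<le> f (Y - {j}) + f (insert j X)"
      using M_nat_EXC_m_swap_into_X[OF mm sub True _ violation] jk by auto
    moreover have "Y - {j} = insert k (X - {i})" "insert j X = insert i Y - {k}"
      using True jk i by auto
    ultimately show False using violation jk unfolding exchange_at_def by (auto simp: add.commute)
  next
    case False
    have "f X \<noteq> -\<infinity>"
      using exchange_at_if_minf[of f X Y i] not_pinf[OF sub(1)] not_pinf[OF sub(2)] violation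
      by blast
    then have X_finite_value: "\<bar>f X\<bar> \<noteq> \<infinity>" using not_pinf sub by auto
    obtain J where J: "J \<subseteq> Y - X" "2 \<le> card J"
      "f X + f Y \<le> f ((X - {i}) \<union> J) + f ((Y - J) \<union> {i})"
      using M_nat_EXC_m_witness_of_violation[OF mm sub i \<open>finite Y\<close> violation] .
    have "J = Y - X" using J(1,2) card_Y_diff \<open>finite Y\<close> by (intro card_seteq) auto
    moreover have "Y - (Y - X) \<union> {i} = insert i (X \<inter> Y)" by auto
    ultimately have start: "f X + f Y \<le> f ((X - {i}) \<union> (Y - X)) + f (insert i (X \<inter> Y))"
      using J(3) by simp
    define Z where "Z = (X - {i}) \<union> (Y - X)"
    obtain u where u: "u \<in> X - Y" "u \<noteq> i" using False i by auto
    have "card {i, u} \<le> card (X - Y)" using u i \<open>finite X\<close> by (intro card_mono) auto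
    then have card_X_diff: "2 \<le> card (X - Y)" using u by (auto simp: card_insert_if)
    have Z_subset: "Z \<subseteq> N" using Z_def sub by auto
    have "Z - X = {j, k}" "X - Z = {i}" using Z_def jk i by auto
    then have "exchange_at f Z X j"
      using closer[OF _ Z_subset sub(1)] jk card_X_diff card_Y_diff by auto
    then consider (remove) "f Z + f X \<le> f (Z - {j}) + f (insert j X)"
      | (swap) "f Z + f X \<le> f (insert i (Z - {j})) + f (insert j X - {i})"
      unfolding exchange_at_def \<open>X - Z = {i}\<close> by auto
    then obtain a b where ab: "Y - X = {a, b}" "a \<noteq> b"
      "f Z + f X \<le> f (insert a X) + f (insert b (X - {i}))"
    proof cases
      case remove
      moreover have "Z - {j} = insert k (X - {i})" using Z_def jk by auto
      ultimately show thesis using that[of j k] jk by (simp add: add.commute)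
    next
      case swap
      moreover have "insert i (Z - {j}) = insert k X" "insert j X - {i} = insert j (X - {i})"
        using Z_def jk i by auto
      ultimately show thesis using that[of k j] jk by auto
    qed
    from M_nat_EXC_m_telescope[OF mm sub i ab(1,2) X_finite_value start ab(3)[unfolded Z_def]]
    show False using violation ab(1) unfolding exchange_at_def by auto
  qed
qed

lemma normalized_minimal_violation_if_violation:
  fixes f :: "'a set \<Rightarrow> ereal"
  assumes fin: "finite N" and val: "valued_on N f"
    and sub: "X \<subseteq> N" "Y \<subseteq> N" and i: "i \<in> X - Y" and card_Y_diff: "3 \<le> card (Y - X)"
    and closer: "\<And>X' Y' i'. card (X' - Y') + card (Y' - X') < card (X - Y) + card (Y - X) \<Longrightarrow>
      X' \<subseteq> N \<Longrightarrow> Y' \<subseteq> N \<Longrightarrow> i' \<in> X' - Y' \<Longrightarrow> exchange_at f X' Y' i'"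
    and violation: "\<not> exchange_at f X Y i"
  obtains q where "normalized_minimal_violation N (modular_shift f q) X Y i"
proof -
  have not_pinf: "\<And>S. S \<subseteq> N \<Longrightarrow> f S \<noteq> \<infinity>" using val unfolding valued_on_def by blast
  have fin_XY: "finite X" "finite Y" using fin sub finite_subset by auto
  have X_not_minf: "f X \<noteq> -\<infinity>" and Y_not_minf: "f Y \<noteq> -\<infinity>"
    using exchange_at_if_minf[of f X Y i] not_pinf[OF sub(1)] not_pinf[OF sub(2)] violation by auto
  have "f S \<noteq> \<infinity>" if "S \<subseteq> X \<union> Y" for S
    using that sub by (intro not_pinf) auto
  then obtain q where q:
    "modular_shift f q (X - {i}) \<le> modular_shift f q X"
    "\<And>v. v \<in> Y - X \<Longrightarrow> modular_shift f q (insert v (X - {i})) \<le> modular_shift f q X"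
    "modular_shift f q (insert i Y) < modular_shift f q Y"
    "\<And>j. j \<in> Y - X \<Longrightarrow> modular_shift f q (insert i Y - {j}) < modular_shift f q Y"
    using modular_shift_normalizes_violation[OF fin_XY i _ violation] by blast
  have closer_shift: "exchange_at (modular_shift f q) X' Y' i'"
    if "X' \<subseteq> N" "Y' \<subseteq> N" "i' \<in> X' - Y'"
      "card (X' - Y') + card (Y' - X') < card (X - Y) + card (Y - X)" for X' Y' i'
  proof (rule exchange_at_modular_shift)
    show "finite X'" "finite Y'" using that(1,2) fin finite_subset by auto
  qed (use that closer in auto)
  have "normalized_minimal_violation N (modular_shift f q) X Y i"
  proof
    show "\<And>S. S \<subseteq> N \<Longrightarrow> modular_shift f q S \<noteq> \<infinity>" using not_pinf by simp
  qed (use fin sub i X_not_minf Y_not_minf card_Y_diff closer_shift q in auto)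
  then show ?thesis by (rule that)
qed

lemma exchange_at_if_card_Y_diff_ge_3:
  fixes f :: "'a set \<Rightarrow> ereal"
  assumes fin: "finite N" and val: "valued_on N f" and bn: "B_nat_EXC (dom_f N f)"
    and mm: "M_nat_EXC_m N f"
    and sub: "X \<subseteq> N" "Y \<subseteq> N" and i: "i \<in> X - Y" and card_Y_diff: "3 \<le> card (Y - X)"
    and closer: "\<And>X' Y' i'. card (X' - Y') + card (Y' - X') < card (X - Y) + card (Y - X) \<Longrightarrow>
      X' \<subseteq> N \<Longrightarrow> Y' \<subseteq> N \<Longrightarrow> i' \<in> X' - Y' \<Longrightarrow> exchange_at f X' Y' i'"
  shows "exchange_at f X Y i"
proof (rule ccontr)
  assume violation: "\<not> exchange_at f X Y i"
  obtain q where "normalized_minimal_violation N (modular_shift f q) X Y i"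
    using normalized_minimal_violation_if_violation[OF fin val sub i card_Y_diff closer violation] .
  then interpret normalized_minimal_violation N "modular_shift f q" X Y i .
  show False
  proof (cases "X - Y = {i}")
    case True
    show False
    proof (rule contradiction_if_X_diff_singleton[OF True])
      fix j assume j: "j \<in> Y - X"
      have "sum q Y + sum q X = sum q (Y - {j}) + sum q (insert j X)"
        using j finite_X finite_Y by (simp add: sum_diff1)
      with M_nat_EXC_m_swap_into_X[OF mm sub True j violation]
      show "modular_shift f q Y + modular_shift f q X
        \<le> modular_shift f q (Y - {j}) + modular_shift f q (insert j X)"
        by (rule modular_shift_add_le)
    qed
  next
    case False
    show False
    proof (rule contradiction_if_X_diff_not_singleton[OF False])
      fix u assume u: "u \<in> X - Y - {i}"
      have "X \<in> dom_f N f" "Y \<in> dom_f N f"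
        using sub X_not_minf Y_not_minf unfolding dom_f_def by auto
      with bn u consider "insert u Y \<in> dom_f N f"
        | k where "k \<in> Y - X" "insert u Y - {k} \<in> dom_f N f"
        unfolding B_nat_EXC_def by blast
      then show "\<exists>V \<subseteq> Y - X. card V \<le> 1 \<and> modular_shift f q (insert u (Y - V)) \<noteq> -\<infinity>"
      proof cases
        case 1
        then show ?thesis by (intro exI[of _ "{}"]) (auto simp: dom_f_def)
      next
        case (2 k)
        moreover have "insert u Y - {k} = insert u (Y - {k})" using 2(1) u by auto
        ultimately show ?thesis by (intro exI[of _ "{k}"]) (auto simp: dom_f_def)
      qed
    qed
  qed
qed

lemma exchange_at_if_M_nat_EXC_m:
  fixes f :: "'a set \<Rightarrow> ereal"
  assumes fin: "finite N" and val: "valued_on N f" and bn: "B_nat_EXC (dom_f N f)"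
    and mm: "M_nat_EXC_m N f"
  shows "X \<subseteq> N \<Longrightarrow> Y \<subseteq> N \<Longrightarrow> i \<in> X - Y \<Longrightarrow> exchange_at f X Y i"
proof (induction "card (X - Y) + card (Y - X)" arbitrary: X Y i rule: less_induct)
  case less
  consider "card (Y - X) \<le> 1" | "card (Y - X) = 2" | "3 \<le> card (Y - X)" by linarith
  then show ?case
  proof cases
    case 1
    show ?thesis
    proof (rule ccontr)
      assume "\<not> exchange_at f X Y i"
      moreover have "finite Y" using fin less.prems(2) finite_subset by blast
      ultimately obtain J where "J \<subseteq> Y - X" "2 \<le> card J"
        using M_nat_EXC_m_witness_of_violation[OF mm less.prems] by metis
      then show False using card_mono[of "Y - X" J] \<open>finite Y\<close> 1 by auto
    qed
  next
    case 2
    then show ?thesis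
      by (rule exchange_at_if_card_Y_diff_eq_2[OF fin val mm less.prems _ less.hyps])
  next
    case 3
    then show ?thesis
      by (rule exchange_at_if_card_Y_diff_ge_3[OF fin val bn mm less.prems _ less.hyps])
  qed
qed

theorem proposition4:
  fixes N :: "'a set" and f :: "'a set \<Rightarrow> ereal"
  assumes "finite N"
    and "valued_on N f"
    and "dom_f N f \<noteq> {}"
    and "B_nat_EXC (dom_f N f)"
    and "M_nat_EXC_m N f"
  shows "M_nat_EXC N f"
  using exchange_at_if_M_nat_EXC_m[OF assms(1,2,4,5)] by (rule M_nat_EXC_if_exchange_at)

end
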